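(* Let $n\ge 3$ and $\zeta_n=e^{2\pi i/n}$. If $n$ is prime, then $R(U_n)=\mathbb{Z}[\zeta_n]$. If $n$ is not prime, then $R(U_n)=\mathbb{Z}[1/n,\zeta_n]$.
   Context: Let $\mathbf{T}=\{z\in\mathbb{C}:|z|=1\}$. An angle is an element of the quotient group $\mathbf{T}/\{\pm1\}$; in formulas an angle is represented by either of its two representatives $u\in\mathbf{T}$. For $p\in\mathbb{C}$ and an angle $u$, let $L_u(p)=\{p+ru: r\in\mathbb{R}\}$. For distinct angles $u,v$ and $p,q\in\mathbb{C}$, $I_{u,v}(p,q)$ denotes the unique point of $L_u(p)\cap L_v(q)$. For a subgroup $U$ of $\mathbf{T}/\{\pm1\}$, $R(U)$ denotes the smallest subset of $\mathbb{C}$ that contains $0$ and $1$ and such that $I_{u,v}(p,q)\in R(U)$ whenever $p,q\in R(U)$ and $u,v$ are distinct elements of $U$. For $n\ge 3$, $U_n$ denotes the cyclic subgroup of $\mathbf{T}/\{\pm1\}$ of order $n$ generated by the class of $e^{i\pi/n}$ (i.e. the angles $k\pi/n$, $0\le k<n$). $\mathbb{Z}[1/n,\zeta_n]$ is the subring of $\mathbb{C}$ generated by $1/n$ and $\zeta_n$. *)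

theory Defs
  imports "HOL-Analysis.Analysis" "HOL-Computational_Algebra.Primes"
begin

text \<open>The unit circle T, and angles = elements of T/{+-1}, represented as the
  equivalence class {u, -u} of a representative u.\<close>
definition circle :: "complex set" where
  "circle = {z. cmod z = 1}"

definition angle_of :: "complex \<Rightarrow> complex set" where
  "angle_of u = {u, -u}"

definition angles :: "complex set set" where
  "angles = angle_of ` circle"

definition line :: "complex \<Rightarrow> complex \<Rightarrow> complex set" where
  "line u p = {p + complex_of_real r * u | r. True}"

text \<open>For distinct angles the two lines meet in exactly one point, so membership
  in the intersection is the point I_{u,v}(p,q).\<close>
inductive_set Rset :: "complex set set \<Rightarrow> complex set" for U :: "complex set set" where
  zero: "0 \<in> Rset U"
| one: "1 \<in> Rset U"
| inter: "\<lbrakk> p \<in> Rset U; q \<in> Rset U; A \<in> U; B \<in> U; A \<noteq> B; u \<in> A; v \<in> B;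
            z \<in> line u p \<inter> line v q \<rbrakk> \<Longrightarrow> z \<in> Rset U"

text \<open>U_n: the cyclic subgroup of order n generated by the class of exp(i pi/n).\<close>
definition U_n :: "nat \<Rightarrow> complex set set" where
  "U_n n = {angle_of (exp (\<i> * complex_of_real (real k * pi / real n))) | k. k < n}"

inductive_set subring_gen :: "complex set \<Rightarrow> complex set" for S :: "complex set" where
  gen: "x \<in> S \<Longrightarrow> x \<in> subring_gen S"
| zero: "0 \<in> subring_gen S"
| one: "1 \<in> subring_gen S"
| add: "\<lbrakk> x \<in> subring_gen S; y \<in> subring_gen S \<rbrakk> \<Longrightarrow> x + y \<in> subring_gen S"
| neg: "x \<in> subring_gen S \<Longrightarrow> - x \<in> subring_gen S"
| mult: "\<lbrakk> x \<in> subring_gen S; y \<in> subring_gen S \<rbrakk> \<Longrightarrow> x * y \<in> subring_gen S"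

definition zeta :: "nat \<Rightarrow> complex" where
  "zeta n = exp (2 * pi * \<i> / of_nat n)"

end

theory Submission
  imports Defs "HOL-Computational_Algebra.Polynomial"
begin

text \<open>
  Let omega = exp(i pi/n) and zeta = omega^2.  A line whose angle lies in U_n is determined by a
  point p and the square d of its direction, an n-th root of unity: it is the set of z with
  z - p = d cnj (z - p).  Two such lines (d ~= e) meet in p + d ((q-p) - e cnj (q-p)) / (d - e).

  Upper bounds: by this formula R(U_n) lies in every set containing 0, 1 and closed under +, -
  and w |-> (w - e cnj w) / (1 - c) (c, e roots of unity, c ~= 1).  Z[1/n, zeta] is such a set since
  1/(1 - c) = -(1/n) Sum_j j c^j; for prime n so is Z[zeta], as 1 - zeta divides w - e cnj w and
  1 - c divides 1 - zeta.

  Lower bounds: translations, real scalings and the rotation by zeta permute the admissible lines,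
  and -1, 2, zeta are explicit intersection points; so R(U_n) is an additive group whose
  multipliers {x. x R(U_n) <= R(U_n)} form a ring containing zeta, giving Z[zeta] <= R(U_n).  For
  composite n the real ratios |1 - u|^2 / |1 - v|^2 of roots of unity are multipliers too, and
  product formulas over roots of unity turn them into 1/|1 - zeta|^2 and finally into 1/n.
\<close>

section \<open>Roots of unity\<close>

lemma unit_cnj: "cmod u = 1 \<Longrightarrow> cnj u = inverse u"
  by (metis complex_norm_square inverse_unique of_real_1 one_power2)

definition omega :: "nat \<Rightarrow> complex" where
  "omega n = exp (\<i> * of_real (pi / real n))"

lemma omega_pow: "omega n ^ k = exp (\<i> * of_real (real k * pi / real n))"
  unfolding omega_def by (simp add: exp_of_nat_mult[symmetric] algebra_simps)

lemma norm_omega_pow [simp]: "cmod (omega n ^ k) = 1"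
  by (simp add: norm_power omega_def)

lemma omega_pow_sq: "(omega n ^ k)\<^sup>2 = zeta n ^ k"
  unfolding zeta_def omega_def
  by (simp add: exp_of_nat_mult[symmetric] power_mult[symmetric] algebra_simps)

lemma zeta_pow: "zeta n ^ k = exp (2 * of_real pi * \<i> * of_nat k / of_nat n)"
  unfolding zeta_def by (simp add: exp_of_nat_mult[symmetric] algebra_simps)

lemma zeta_pow_eq_iff: "n \<ge> 1 \<Longrightarrow> zeta n ^ j = zeta n ^ k \<longleftrightarrow> j mod n = k mod n"
  unfolding zeta_pow by (rule complex_root_unity_eq)

lemma zeta_pow_eq_1_iff: "n \<ge> 1 \<Longrightarrow> zeta n ^ k = 1 \<longleftrightarrow> n dvd k"
  unfolding zeta_pow by (rule complex_root_unity_eq_1)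

lemma zeta_pow_n: "n \<ge> 1 \<Longrightarrow> zeta n ^ n = 1"
  by (simp add: zeta_pow_eq_1_iff)

lemma zeta_nonzero [simp]: "zeta n \<noteq> 0"
  by (simp add: zeta_def)

lemma norm_zeta_pow [simp]: "cmod (zeta n ^ k) = 1"
  by (metis norm_omega_pow omega_pow_sq norm_power power_one)

lemma norm_zeta [simp]: "cmod (zeta n) = 1"
  using norm_zeta_pow[of n 1] by simp

lemma inverse_zeta_pow: "n \<ge> 1 \<Longrightarrow> inverse (zeta n ^ k) = zeta n ^ ((n - 1) * k)"
proof -
  assume n: "n \<ge> 1"
  have "zeta n ^ k * zeta n ^ ((n - 1) * k) = zeta n ^ (n * k)"
    using n by (simp add: power_add[symmetric] algebra_simps)
  also have "\<dots> = 1" using zeta_pow_eq_1_iff[OF n] by simp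
  finally show ?thesis by (rule inverse_unique)
qed

text \<open>The group mu n of n-th roots of unity: the possible squared directions of lines with angle in U_n.\<close>

definition mu :: "nat \<Rightarrow> complex set" where
  "mu n = range (\<lambda>k. zeta n ^ k)"

lemma zeta_pow_in_mu [simp, intro]: "zeta n ^ k \<in> mu n"
  by (simp add: mu_def)

lemma one_in_mu [simp, intro]: "1 \<in> mu n"
  using zeta_pow_in_mu[of n 0] by simp

lemma zeta_in_mu [simp, intro]: "zeta n \<in> mu n"
  using zeta_pow_in_mu[of n 1] by simp

lemma mu_norm: "d \<in> mu n \<Longrightarrow> cmod d = 1"
  by (auto simp: mu_def)

lemma mu_nonzero: "d \<in> mu n \<Longrightarrow> d \<noteq> 0"
  by (auto simp: mu_def)

lemma mu_cnj: "d \<in> mu n \<Longrightarrow> cnj d = inverse d"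
  by (simp add: mu_norm unit_cnj)

lemma mu_mult: "d \<in> mu n \<Longrightarrow> e \<in> mu n \<Longrightarrow> d * e \<in> mu n"
  by (auto simp: mu_def power_add[symmetric])

lemma mu_inverse: "n \<ge> 1 \<Longrightarrow> d \<in> mu n \<Longrightarrow> inverse d \<in> mu n"
  by (auto simp: mu_def inverse_zeta_pow)

lemma mu_cnj_closed: "n \<ge> 1 \<Longrightarrow> d \<in> mu n \<Longrightarrow> cnj d \<in> mu n"
  by (simp add: mu_cnj mu_inverse)

lemma mu_divide: "n \<ge> 1 \<Longrightarrow> d \<in> mu n \<Longrightarrow> e \<in> mu n \<Longrightarrow> d / e \<in> mu n"
  by (simp add: divide_inverse mu_inverse mu_mult)

lemma mu_pow_n:
  assumes "n \<ge> 1" and "d \<in> mu n" shows "d ^ n = 1"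
proof -
  obtain k where "d = zeta n ^ k" using assms(2) by (auto simp: mu_def)
  then have "d ^ n = (zeta n ^ n) ^ k" by (simp flip: power_mult add: mult.commute)
  then show ?thesis using zeta_pow_n[OF assms(1)] by simp
qed

lemma mu_representative:
  assumes "n \<ge> 1" and "d \<in> mu n" shows "\<exists>k<n. d = zeta n ^ k"
proof -
  obtain k where "d = zeta n ^ k" using assms(2) by (auto simp: mu_def)
  then have "d = zeta n ^ (k mod n)" using zeta_pow_eq_iff[OF assms(1)] by simp
  moreover have "k mod n < n" using assms(1) by simp
  ultimately show ?thesis by blast
qed

lemma cnj_zeta: "n \<ge> 1 \<Longrightarrow> cnj (zeta n) = zeta n ^ (n - 1)"
  using mu_cnj[OF zeta_in_mu] inverse_zeta_pow[of n 1] by simp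

section \<open>Lines given by squared directions\<close>

definition on_line :: "complex \<Rightarrow> complex \<Rightarrow> complex \<Rightarrow> bool" where
  "on_line d p z \<longleftrightarrow> z - p = d * cnj (z - p)"

lemma line_iff_on_line:
  assumes u: "cmod u = 1"
  shows "z \<in> line u p \<longleftrightarrow> on_line (u\<^sup>2) p z"
proof
  have cu: "cnj u = inverse u" and u0: "u \<noteq> 0" using u unit_cnj by auto
  show "z \<in> line u p \<Longrightarrow> on_line (u\<^sup>2) p z"
    using u0 by (auto simp: line_def on_line_def cu power2_eq_square field_simps)
  assume "on_line (u\<^sup>2) p z"
  then have "cnj ((z - p) / u) = (z - p) / u"
    using u0 by (simp add: on_line_def cu power2_eq_square field_simps)
  then obtain r where "(z - p) / u = of_real r"
    by (metis Reals_cases Reals_cnj_iff)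
  then have "z = p + of_real r * u"
    using u0 by (simp add: field_simps)
  then show "z \<in> line u p" unfolding line_def by blast
qed

lemma on_line_offset: "z = p + x \<Longrightarrow> x = d * cnj x \<Longrightarrow> on_line d p z"
  by (simp add: on_line_def)

lemma on_line_translate: "on_line d p z \<Longrightarrow> on_line d (p + t) (z + t)"
  by (simp only: on_line_def add_diff_cancel_right)

lemma on_line_scale:
  assumes "on_line d p z" shows "on_line d (of_real c * p) (of_real c * z)"
proof -
  define x where "x = z - p"
  have "x = d * cnj x" using assms unfolding on_line_def x_def[symmetric] .
  then have "of_real c * x = d * cnj (of_real c * x)"
    by (metis complex_cnj_mult complex_cnj_complex_of_real mult.left_commute)
  then show ?thesis unfolding on_line_def right_diff_distrib[symmetric] x_def[symmetric] .
qed

lemma on_line_rotate: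
  assumes w: "cmod w = 1" and "on_line d p z"
  shows "on_line (w * w * d) (w * p) (w * z)"
proof -
  define x where "x = z - p"
  have x: "x = d * cnj x" using assms(2) unfolding on_line_def x_def[symmetric] .
  have "w * cnj w = 1" using complex_norm_square[of w] w by simp
  have "w * w * d * cnj (w * x) = w * (d * cnj x) * (w * cnj w)" by (simp add: algebra_simps)
  also have "\<dots> = w * x" using \<open>w * cnj w = 1\<close> by (simp add: x[symmetric])
  finally show ?thesis unfolding on_line_def right_diff_distrib[symmetric] x_def[symmetric] by (rule sym)
qed

definition meet :: "complex \<Rightarrow> complex \<Rightarrow> complex \<Rightarrow> complex \<Rightarrow> complex" where
  "meet d e p q = p + d * ((q - p) - e * cnj (q - p)) / (d - e)"

lemma on_lines_iff_meet:
  assumes d: "cmod d = 1" and e: "cmod e = 1" and de: "d \<noteq> e"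
  shows "on_line d p z \<and> on_line e q z \<longleftrightarrow> z = meet d e p q"
proof -
  have cd: "cnj d = inverse d" and ce: "cnj e = inverse e" using d e unit_cnj by auto
  have d0: "d \<noteq> 0" and e0: "e \<noteq> 0" and de0: "d - e \<noteq> 0" using d e de by auto
  define w where "w = q - p"
  define x where "x = z - p"
  have "on_line d p z \<and> on_line e q z \<longleftrightarrow> x = d * cnj x \<and> x - w = e * (cnj x - cnj w)"
    by (simp add: on_line_def w_def x_def algebra_simps)
  also have "\<dots> \<longleftrightarrow> x = d * ((w - e * cnj w) / (d - e))"
  proof
    assume x: "x = d * cnj x \<and> x - w = e * (cnj x - cnj w)"
    then have "cnj x * (d - e) = w - e * cnj w" by (simp add: algebra_simps)
    then have "cnj x = (w - e * cnj w) / (d - e)"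
      using de0 by (simp add: field_simps)
    then show "x = d * ((w - e * cnj w) / (d - e))"
      using x by simp
  next
    assume x: "x = d * ((w - e * cnj w) / (d - e))"
    have cx: "cnj x = (w - e * cnj w) / (d - e)"
      unfolding x using d0 e0 de0 by (simp add: cd ce field_simps)
    then have xd: "x = d * cnj x" using x by simp
    then have "x - e * cnj x = (d - e) * cnj x" by (simp add: algebra_simps)
    also have "\<dots> = w - e * cnj w" using cx de0 by simp
    finally show "x = d * cnj x \<and> x - w = e * (cnj x - cnj w)"
      using xd by (simp add: algebra_simps)
  qed
  also have "\<dots> \<longleftrightarrow> z = meet d e p q"
    unfolding meet_def w_def x_def by (auto simp: diff_eq_eq add.commute)
  finally show ?thesis .
qed

lemma meet_eq:
  assumes "d \<noteq> 0" and "d \<noteq> e"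
  shows "meet d e p q = p + ((q - p) - e * cnj (q - p)) / (1 - e / d)"
  using assms by (simp add: meet_def field_simps)

lemma angle_of_omega_in_U_n: "k < n \<Longrightarrow> angle_of (omega n ^ k) \<in> U_n n"
  unfolding U_n_def omega_pow by auto

lemma U_n_member:
  assumes "A \<in> U_n n" and "u \<in> A"
  shows "\<exists>k<n. A = angle_of (omega n ^ k) \<and> cmod u = 1 \<and> u\<^sup>2 = zeta n ^ k"
proof -
  obtain k where k: "k < n" "A = angle_of (omega n ^ k)"
    using assms(1) unfolding U_n_def omega_pow[symmetric] by blast
  then have "u = omega n ^ k \<or> u = - (omega n ^ k)" using assms(2) by (auto simp: angle_of_def)
  then have "cmod u = 1 \<and> u\<^sup>2 = zeta n ^ k" by (auto simp: omega_pow_sq)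
  with k show ?thesis by blast
qed

lemma Rset_intro:
  assumes n: "n \<ge> 1" and p: "p \<in> Rset (U_n n)" and q: "q \<in> Rset (U_n n)"
    and d: "d \<in> mu n" and e: "e \<in> mu n" and de: "d \<noteq> e"
    and zp: "on_line d p z" and zq: "on_line e q z"
  shows "z \<in> Rset (U_n n)"
proof -
  obtain j k where j: "j < n" "d = zeta n ^ j" and k: "k < n" "e = zeta n ^ k"
    using mu_representative[OF n d] mu_representative[OF n e] by blast
  have "angle_of (omega n ^ j) \<noteq> angle_of (omega n ^ k)"
  proof
    assume "angle_of (omega n ^ j) = angle_of (omega n ^ k)"
    then have "omega n ^ j = omega n ^ k \<or> omega n ^ j = - (omega n ^ k)"
      by (auto simp: angle_of_def)
    then have "(omega n ^ j)\<^sup>2 = (omega n ^ k)\<^sup>2" by auto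
    with j k de show False by (simp add: omega_pow_sq)
  qed
  moreover have "z \<in> line (omega n ^ j) p" "z \<in> line (omega n ^ k) q"
    using zp zq j k by (simp_all add: line_iff_on_line omega_pow_sq)
  ultimately show ?thesis
    by (intro Rset.inter[OF p q angle_of_omega_in_U_n[OF j(1)] angle_of_omega_in_U_n[OF k(1)]])
      (auto simp: angle_of_def)
qed

lemma Rset_induct [consumes 2, case_names zero one meet]:
  assumes x: "x \<in> Rset (U_n n)" and n: "n \<ge> 1"
    and zero: "P 0" and one: "P 1"
    and meet: "\<And>p q d e z. p \<in> Rset (U_n n) \<Longrightarrow> P p \<Longrightarrow> q \<in> Rset (U_n n) \<Longrightarrow> P q \<Longrightarrow>
       d \<in> mu n \<Longrightarrow> e \<in> mu n \<Longrightarrow> d \<noteq> e \<Longrightarrow> on_line d p z \<Longrightarrow> on_line e q z \<Longrightarrow> P z"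
  shows "P x"
  using x
proof (induction rule: Rset.induct)
  case (inter p q A B u v z)
  obtain j where j: "j < n" "A = angle_of (omega n ^ j)" "cmod u = 1" "u\<^sup>2 = zeta n ^ j"
    using U_n_member[OF inter.hyps(3,6)] by blast
  obtain k where k: "k < n" "B = angle_of (omega n ^ k)" "cmod v = 1" "v\<^sup>2 = zeta n ^ k"
    using U_n_member[OF inter.hyps(4,7)] by blast
  have "zeta n ^ j \<noteq> zeta n ^ k"
    using inter.hyps(5) j k zeta_pow_eq_iff[OF n] by auto
  moreover have "on_line (zeta n ^ j) p z" "on_line (zeta n ^ k) q z"
    using inter.hyps(8) line_iff_on_line[OF j(3)] line_iff_on_line[OF k(3)] j(4) k(4) by auto
  ultimately show ?case
    using meet[OF inter.hyps(1) inter.IH(1) inter.hyps(2) inter.IH(2)] by blast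
qed (use zero one in auto)

lemma Rset_meet:
  assumes "n \<ge> 1" "p \<in> Rset (U_n n)" "q \<in> Rset (U_n n)" "d \<in> mu n" "e \<in> mu n" "d \<noteq> e"
  shows "meet d e p q \<in> Rset (U_n n)"
  using assms on_lines_iff_meet[of d e p "meet d e p q" q] by (auto intro: Rset_intro simp: mu_norm)

lemma Rset_map:
  assumes n: "n \<ge> 1" and x: "x \<in> Rset (U_n n)"
    and f0: "f 0 \<in> Rset (U_n n)" and f1: "f 1 \<in> Rset (U_n n)"
    and g: "\<And>d. d \<in> mu n \<Longrightarrow> g d \<in> mu n" and g_inj: "inj_on g (mu n)"
    and f_line: "\<And>d p z. d \<in> mu n \<Longrightarrow> on_line d p z \<Longrightarrow> on_line (g d) (f p) (f z)"
  shows "f x \<in> Rset (U_n n)"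
  using x n
proof (induction rule: Rset_induct)
  case (meet p q d e z)
  have "g d \<noteq> g e"
    using \<open>d \<in> mu n\<close> \<open>e \<in> mu n\<close> \<open>d \<noteq> e\<close> g_inj by (auto dest: inj_onD)
  then show ?case
    using Rset_intro[OF n \<open>f p \<in> Rset (U_n n)\<close> \<open>f q \<in> Rset (U_n n)\<close>
        g[OF \<open>d \<in> mu n\<close>] g[OF \<open>e \<in> mu n\<close>]]
      f_line[OF \<open>d \<in> mu n\<close> \<open>on_line d p z\<close>] f_line[OF \<open>e \<in> mu n\<close> \<open>on_line e q z\<close>]
    by blast
qed (use f0 f1 in auto)

lemma Rset_shift:
  assumes "n \<ge> 1" "t \<in> Rset (U_n n)" "t + 1 \<in> Rset (U_n n)" "x \<in> Rset (U_n n)"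
  shows "x + t \<in> Rset (U_n n)"
  by (rule Rset_map[where f = "\<lambda>x. x + t" and g = id])
    (use assms in \<open>auto simp: add.commute intro: on_line_translate\<close>)

lemma Rset_scale:
  assumes "n \<ge> 1" "of_real c \<in> Rset (U_n n)" "x \<in> Rset (U_n n)"
  shows "of_real c * x \<in> Rset (U_n n)"
  by (rule Rset_map[where f = "\<lambda>x. of_real c * x" and g = id])
    (use assms in \<open>auto intro: on_line_scale Rset.zero\<close>)

lemma Rset_rotate:
  assumes "n \<ge> 1" "zeta n \<in> Rset (U_n n)" "x \<in> Rset (U_n n)"
  shows "zeta n * x \<in> Rset (U_n n)"
  by (rule Rset_map[where f = "\<lambda>x. zeta n * x" and g = "\<lambda>d. zeta n * zeta n * d"])
    (use assms in \<open>auto simp: mu_mult inj_on_def intro: on_line_rotate Rset.zero\<close>)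

definition multipliers :: "complex set \<Rightarrow> complex set" where
  "multipliers S = {x. \<forall>y\<in>S. x * y \<in> S}"

lemma multipliersI: "(\<And>y. y \<in> S \<Longrightarrow> x * y \<in> S) \<Longrightarrow> x \<in> multipliers S"
  by (simp add: multipliers_def)

lemma multipliers_subset: "1 \<in> S \<Longrightarrow> multipliers S \<subseteq> S"
  unfolding multipliers_def by force

lemma multipliers_mult: "x \<in> multipliers S \<Longrightarrow> y \<in> multipliers S \<Longrightarrow> x * y \<in> multipliers S"
  by (simp add: multipliers_def mult.assoc)

lemma multipliers_prod:
  "(\<And>i. i \<in> A \<Longrightarrow> f i \<in> multipliers S) \<Longrightarrow> (\<Prod>i\<in>A. f i) \<in> multipliers S"
  by (induction A rule: infinite_finite_induct) (auto simp: multipliers_def mult.assoc)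

lemma subring_gen_multipliers:
  assumes zero: "0 \<in> S" and add: "\<And>x y. x \<in> S \<Longrightarrow> y \<in> S \<Longrightarrow> x + y \<in> S"
    and neg: "\<And>x. x \<in> S \<Longrightarrow> - x \<in> S" and G: "G \<subseteq> multipliers S"
  shows "subring_gen G \<subseteq> multipliers S"
proof
  fix x assume "x \<in> subring_gen G"
  then show "x \<in> multipliers S"
    by induction (use G zero add neg in \<open>auto simp: multipliers_def distrib_right mult.assoc\<close>)
qed

lemma subring_gen_diff: "x \<in> subring_gen G \<Longrightarrow> y \<in> subring_gen G \<Longrightarrow> x - y \<in> subring_gen G"
  by (metis diff_conv_add_uminus subring_gen.add subring_gen.neg)

lemma subring_gen_sum:
  "(\<And>i. i \<in> A \<Longrightarrow> f i \<in> subring_gen G) \<Longrightarrow> (\<Sum>i\<in>A. f i) \<in> subring_gen G"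
  by (induction A rule: infinite_finite_induct) (auto intro: subring_gen.intros)

lemma subring_gen_power: "x \<in> subring_gen G \<Longrightarrow> x ^ k \<in> subring_gen G"
  by (induction k) (auto intro: subring_gen.intros)

lemma subring_gen_of_nat: "of_nat k \<in> subring_gen G"
  by (induction k) (auto intro: subring_gen.intros)

lemma subring_gen_cnj:
  assumes "x \<in> subring_gen G" and "\<And>g. g \<in> G \<Longrightarrow> cnj g \<in> subring_gen G"
  shows "cnj x \<in> subring_gen G"
  using assms(1) by induction (auto intro: subring_gen.intros assms(2))

lemma mu_in_subring_gen: "zeta n \<in> G \<Longrightarrow> d \<in> mu n \<Longrightarrow> d \<in> subring_gen G"
  by (auto simp: mu_def intro: subring_gen_power subring_gen.gen)

section \<open>Z[zeta] is contained in R(U n)\<close>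

context
  fixes n :: nat
  assumes n3: "n \<ge> 3"
begin

lemma zeta_ne_one: "zeta n \<noteq> 1"
  using zeta_pow_eq_1_iff[of n 1] n3 by (auto dest: dvd_imp_le)

lemma zeta_plus_one_ne_zero: "zeta n + 1 \<noteq> 0" "1 + zeta n \<noteq> 0"
proof -
  show "zeta n + 1 \<noteq> 0"
  proof
    assume "zeta n + 1 = 0"
    then have "zeta n = -1" by (simp add: eq_neg_iff_add_eq_0)
    then have "zeta n ^ 2 = 1" by simp
    then show False using zeta_pow_eq_1_iff[of n 2] n3 by (auto dest: dvd_imp_le)
  qed
  then show "1 + zeta n \<noteq> 0" by (simp add: add.commute)
qed

lemma zeta_ne_inverse: "zeta n \<noteq> inverse (zeta n)"
proof
  assume "zeta n = inverse (zeta n)"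
  then have "(zeta n - 1) * (zeta n + 1) = 0" by (simp add: field_simps)
  then show False using zeta_ne_one zeta_plus_one_ne_zero by simp
qed

text \<open>The points zeta/(zeta+1), -1/(zeta+1), -1, (2 zeta+1)/(zeta+1), 2 and zeta are successively
  constructed as intersections of lines with squared directions among 1, zeta, 1/zeta, zeta^2.
  Each incidence is checked by exhibiting the offset x from the base point, with x = d cnj x.\<close>

lemma Rset_half: "zeta n / (zeta n + 1) \<in> Rset (U_n n)"
proof (rule Rset_intro[OF _ Rset.zero Rset.one zeta_in_mu mu_inverse[OF _ zeta_in_mu] zeta_ne_inverse])
  have cz: "cnj (zeta n) = inverse (zeta n)" by (rule mu_cnj[OF zeta_in_mu])
  show "on_line (zeta n) 0 (zeta n / (zeta n + 1))"
    by (rule on_line_offset[of _ _ "zeta n / (zeta n + 1)"])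
      (use zeta_plus_one_ne_zero in \<open>simp_all add: cz field_simps\<close>)
  show "on_line (inverse (zeta n)) 1 (zeta n / (zeta n + 1))"
    by (rule on_line_offset[of _ _ "-1 / (zeta n + 1)"])
      (use zeta_plus_one_ne_zero in \<open>simp_all add: cz field_simps\<close>)
qed (use n3 in simp_all)

lemma Rset_minus_one: "-1 \<in> Rset (U_n n)"
proof -
  have n: "n \<ge> 1" using n3 by simp
  have cz: "cnj (zeta n) = inverse (zeta n)" by (rule mu_cnj[OF zeta_in_mu])
  have "1 \<noteq> inverse (zeta n)" using zeta_ne_one by (metis inverse_1 inverse_inverse_eq)
  then have Q: "-1 / (zeta n + 1) \<in> Rset (U_n n)"
  proof (rule Rset_intro[OF n Rset_half Rset.zero one_in_mu mu_inverse[OF n zeta_in_mu]])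
    show "on_line 1 (zeta n / (zeta n + 1)) (-1 / (zeta n + 1))"
      by (rule on_line_offset[of _ _ "-1"]) (use zeta_plus_one_ne_zero in \<open>simp_all add: field_simps\<close>)
    show "on_line (inverse (zeta n)) 0 (-1 / (zeta n + 1))"
      by (rule on_line_offset[of _ _ "-1 / (zeta n + 1)"])
        (use zeta_plus_one_ne_zero in \<open>simp_all add: cz field_simps\<close>)
  qed
  show ?thesis
  proof (rule Rset_intro[OF n Q Rset.zero zeta_in_mu one_in_mu zeta_ne_one])
    show "on_line (zeta n) (-1 / (zeta n + 1)) (-1)"
      by (rule on_line_offset[of _ _ "- zeta n / (zeta n + 1)"])
        (use zeta_plus_one_ne_zero in \<open>simp_all add: cz field_simps\<close>)
    show "on_line 1 0 (-1)" by (rule on_line_offset[of _ _ "-1"]) simp_all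
  qed
qed

lemma Rset_two: "2 \<in> Rset (U_n n)"
proof -
  have n: "n \<ge> 1" using n3 by simp
  have cz: "cnj (zeta n) = inverse (zeta n)" by (rule mu_cnj[OF zeta_in_mu])
  have "1 \<noteq> zeta n" using zeta_ne_one by simp
  then have P': "(2 * zeta n + 1) / (zeta n + 1) \<in> Rset (U_n n)"
  proof (rule Rset_intro[OF n Rset_half Rset.one one_in_mu zeta_in_mu])
    show "on_line 1 (zeta n / (zeta n + 1)) ((2 * zeta n + 1) / (zeta n + 1))"
      by (rule on_line_offset[of _ _ 1]) (use zeta_plus_one_ne_zero in \<open>simp_all add: field_simps\<close>)
    show "on_line (zeta n) 1 ((2 * zeta n + 1) / (zeta n + 1))"
      by (rule on_line_offset[of _ _ "zeta n / (zeta n + 1)"])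
        (use zeta_plus_one_ne_zero in \<open>simp_all add: cz field_simps\<close>)
  qed
  have "inverse (zeta n) \<noteq> 1" using zeta_ne_one by (metis inverse_1 inverse_inverse_eq)
  then show ?thesis
  proof (rule Rset_intro[OF n P' Rset.zero mu_inverse[OF n zeta_in_mu] one_in_mu])
    show "on_line (inverse (zeta n)) ((2 * zeta n + 1) / (zeta n + 1)) 2"
      by (rule on_line_offset[of _ _ "1 / (zeta n + 1)"])
        (use zeta_plus_one_ne_zero in \<open>simp_all add: cz field_simps\<close>)
    show "on_line 1 0 2" by (rule on_line_offset[of _ _ 2]) simp_all
  qed
qed

lemma Rset_zeta: "zeta n \<in> Rset (U_n n)"
proof -
  have n: "n \<ge> 1" using n3 by simp
  have cz: "cnj (zeta n) = inverse (zeta n)" by (rule mu_cnj[OF zeta_in_mu])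
  have "zeta n ^ 2 \<noteq> zeta n" using zeta_ne_one by (simp add: power2_eq_square)
  then show ?thesis
  proof (rule Rset_intro[OF n Rset.zero Rset_minus_one zeta_pow_in_mu zeta_in_mu])
    show "on_line (zeta n ^ 2) 0 (zeta n)"
      by (rule on_line_offset[of _ _ "zeta n"]) (simp_all add: cz field_simps power2_eq_square)
    show "on_line (zeta n) (-1) (zeta n)"
      by (rule on_line_offset[of _ _ "1 + zeta n"]) (simp_all add: cz field_simps)
  qed
qed

lemma Rset_uminus: "x \<in> Rset (U_n n) \<Longrightarrow> - x \<in> Rset (U_n n)"
  using Rset_scale[of n "-1" x] Rset_minus_one n3 by simp

lemma Rset_add:
  assumes "x \<in> Rset (U_n n)" and "y \<in> Rset (U_n n)"
  shows "x + y \<in> Rset (U_n n)"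
proof -
  have n: "n \<ge> 1" using n3 by simp
  have "t + 1 \<in> Rset (U_n n)" if "t \<in> Rset (U_n n)" for t
    using Rset_shift[OF n Rset.one _ that] Rset_two by simp
  then show ?thesis using Rset_shift[OF n assms(2) _ assms(1)] assms(2) by blast
qed

lemma zeta_multiplier: "zeta n \<in> multipliers (Rset (U_n n))"
  using Rset_rotate[of n] Rset_zeta n3 by (simp add: multipliersI)

lemma real_multiplier:
  assumes "x \<in> Rset (U_n n)" and "cnj x = x"
  shows "x \<in> multipliers (Rset (U_n n))"
proof -
  obtain r where "x = of_real r" using assms(2) by (metis Reals_cases Reals_cnj_iff)
  then show ?thesis using Rset_scale[of n r] assms(1) n3 by (simp add: multipliersI)
qed

lemma subring_gen_subset_Rset:
  assumes "G \<subseteq> multipliers (Rset (U_n n))"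
  shows "subring_gen G \<subseteq> Rset (U_n n)"
  using subring_gen_multipliers[OF Rset.zero Rset_add Rset_uminus assms]
    multipliers_subset[OF Rset.one] by blast

lemma subring_zeta_multipliers: "subring_gen {zeta n} \<subseteq> multipliers (Rset (U_n n))"
  using subring_gen_multipliers[OF Rset.zero Rset_add Rset_uminus] zeta_multiplier
  by blast

end

section \<open>Upper bounds for R(U n)\<close>

lemma Rset_subset_closed:
  assumes n: "n \<ge> 1" and zero: "0 \<in> S" and one: "1 \<in> S"
    and add: "\<And>x y. x \<in> S \<Longrightarrow> y \<in> S \<Longrightarrow> x + y \<in> S"
    and diff: "\<And>x y. x \<in> S \<Longrightarrow> y \<in> S \<Longrightarrow> x - y \<in> S"
    and quot: "\<And>c e w. c \<in> mu n \<Longrightarrow> c \<noteq> 1 \<Longrightarrow> e \<in> mu n \<Longrightarrow> w \<in> S \<Longrightarrow>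
       (w - e * cnj w) / (1 - c) \<in> S"
  shows "Rset (U_n n) \<subseteq> S"
proof
  fix x assume "x \<in> Rset (U_n n)"
  then show "x \<in> S" using n
  proof (induction rule: Rset_induct)
    case (meet p q d e z)
    have d0: "d \<noteq> 0" using \<open>d \<in> mu n\<close> by (rule mu_nonzero)
    have "z = meet d e p q"
      using meet on_lines_iff_meet[of d e p z q] by (simp add: mu_norm)
    also have "\<dots> = p + ((q - p) - e * cnj (q - p)) / (1 - e / d)"
      using d0 \<open>d \<noteq> e\<close> by (rule meet_eq)
    finally have z: "z = p + ((q - p) - e * cnj (q - p)) / (1 - e / d)" .
    have "((q - p) - e * cnj (q - p)) / (1 - e / d) \<in> S"
    proof (rule quot)
      show "e / d \<in> mu n" using meet by (intro mu_divide[OF n])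
      show "e / d \<noteq> 1" using d0 \<open>d \<noteq> e\<close> by simp
      show "q - p \<in> S" using meet by (intro diff)
    qed (use meet in simp)
    then show ?case unfolding z using meet by (intro add)
  qed (use zero one in auto)
qed

text \<open>For prime n: w - e cnj w is divisible by 1 - zeta in Z[zeta], and 1 - zeta is divisible by
  1 - c for every root of unity c ~= 1, so the quotients in the intersection formula stay in Z[zeta].\<close>

lemma cnj_congruence:
  assumes n: "n \<ge> 1" and w: "w \<in> subring_gen {zeta n}"
  shows "\<exists>t \<in> subring_gen {zeta n}. w - cnj w = (1 - zeta n) * t"
  using w
proof induction
  case (gen x)
  have "zeta n - zeta n ^ (n - 1) = (1 - zeta n ^ (n - 1)) - (1 - zeta n)" by simp
  also have "\<dots> = (1 - zeta n) * ((\<Sum>i<n - 1. zeta n ^ i) - 1)"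
    by (simp add: one_diff_power_eq algebra_simps)
  finally show ?case using gen cnj_zeta[OF n]
    by (intro bexI[of _ "(\<Sum>i<n - 1. zeta n ^ i) - 1"])
      (auto intro: subring_gen_diff subring_gen_sum subring_gen_power subring_gen.intros)
next
  case (add x y)
  then obtain s t where "s \<in> subring_gen {zeta n}" "x - cnj x = (1 - zeta n) * s"
    "t \<in> subring_gen {zeta n}" "y - cnj y = (1 - zeta n) * t" by blast
  then show ?case by (intro bexI[of _ "s + t"] subring_gen.add) (auto simp: algebra_simps)
next
  case (neg x)
  then obtain s where "s \<in> subring_gen {zeta n}" "x - cnj x = (1 - zeta n) * s" by blast
  then show ?case by (intro bexI[of _ "- s"] subring_gen.neg) (auto simp: algebra_simps)
next
  case (mult x y)
  then obtain s t where st: "s \<in> subring_gen {zeta n}" "x - cnj x = (1 - zeta n) * s"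
    "t \<in> subring_gen {zeta n}" "y - cnj y = (1 - zeta n) * t" by blast
  have cy: "cnj y \<in> subring_gen {zeta n}"
    using mult.hyps(2) by (rule subring_gen_cnj) (simp add: cnj_zeta[OF n] mu_in_subring_gen)
  have "x * y - cnj (x * y) = x * (y - cnj y) + cnj y * (x - cnj x)" by (simp add: algebra_simps)
  also have "\<dots> = (1 - zeta n) * (x * t + cnj y * s)" unfolding st(2,4) by (simp add: algebra_simps)
  finally show ?case
    using st cy mult.hyps by (intro bexI[of _ "x * t + cnj y * s"]) (auto intro: subring_gen.intros)
qed (auto intro: bexI[of _ 0] subring_gen.zero)

lemma twisted_cnj_congruence:
  assumes n: "n \<ge> 1" and w: "w \<in> subring_gen {zeta n}" and e: "e \<in> mu n"
  shows "\<exists>t \<in> subring_gen {zeta n}. w - e * cnj w = (1 - zeta n) * t"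
proof -
  obtain k where k: "e = zeta n ^ k" using e by (auto simp: mu_def)
  obtain s where s: "s \<in> subring_gen {zeta n}" "w - cnj w = (1 - zeta n) * s"
    using cnj_congruence[OF n w] by blast
  have cw: "cnj w \<in> subring_gen {zeta n}"
    using w by (rule subring_gen_cnj) (simp add: cnj_zeta[OF n] mu_in_subring_gen)
  have "w - e * cnj w = (w - cnj w) + (1 - zeta n ^ k) * cnj w" by (simp add: k algebra_simps)
  also have "\<dots> = (1 - zeta n) * (s + (\<Sum>i<k. zeta n ^ i) * cnj w)"
    unfolding s(2) one_diff_power_eq by (simp add: algebra_simps)
  finally have "w - e * cnj w = (1 - zeta n) * (s + (\<Sum>i<k. zeta n ^ i) * cnj w)" .
  moreover have "s + (\<Sum>i<k. zeta n ^ i) * cnj w \<in> subring_gen {zeta n}"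
    by (intro subring_gen.add subring_gen.mult subring_gen_sum subring_gen_power subring_gen.gen s(1) cw)
      auto
  ultimately show ?thesis by blast
qed

lemma one_minus_zeta_divisible:
  assumes p: "prime n" and c: "c \<in> mu n" "c \<noteq> 1"
  shows "\<exists>t \<in> subring_gen {zeta n}. 1 - zeta n = (1 - c) * t"
proof -
  have n: "n \<ge> 1" using p prime_ge_1_nat by blast
  obtain k where k: "c = zeta n ^ k" using c(1) by (auto simp: mu_def)
  have "\<not> n dvd k" using c(2) k zeta_pow_eq_1_iff[OF n] by simp
  then have "coprime k n" using p by (metis prime_imp_coprime_nat coprime_commute)
  moreover have "k \<noteq> 0" using \<open>\<not> n dvd k\<close> by (metis dvd_0_right)
  ultimately obtain x y where xy: "k * x = n * y + 1"
    using bezout_nat[of k n] by (auto simp: coprime_iff_gcd_eq_1)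
  have "c ^ x = zeta n"
    by (simp add: k xy power_add power_mult[symmetric] power_mult zeta_pow_n[OF n])
  then have "1 - zeta n = (1 - c) * (\<Sum>i<x. c ^ i)"
    by (metis one_diff_power_eq)
  then show ?thesis using c(1)
    by (intro bexI[of _ "\<Sum>i<x. c ^ i"] subring_gen_sum subring_gen_power mu_in_subring_gen) auto
qed

lemma Rset_subset_prime:
  assumes p: "prime n"
  shows "Rset (U_n n) \<subseteq> subring_gen {zeta n}"
proof (rule Rset_subset_closed)
  show n: "n \<ge> 1" using p prime_ge_1_nat by blast
  fix c e w assume c: "c \<in> mu n" "c \<noteq> 1" and e: "e \<in> mu n" and w: "w \<in> subring_gen {zeta n}"
  obtain t where t: "t \<in> subring_gen {zeta n}" "w - e * cnj w = (1 - zeta n) * t"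
    using twisted_cnj_congruence[OF n w e] by blast
  obtain s where s: "s \<in> subring_gen {zeta n}" "1 - zeta n = (1 - c) * s"
    using one_minus_zeta_divisible[OF p c] by blast
  have "(w - e * cnj w) / (1 - c) = s * t" using c(2) unfolding t(2) s(2) by simp
  then show "(w - e * cnj w) / (1 - c) \<in> subring_gen {zeta n}"
    using s t by (auto intro: subring_gen.intros)
qed (auto intro: subring_gen.intros subring_gen_diff)

lemma weighted_geometric_sum:
  "((x::complex) - 1) * (\<Sum>j<N. of_nat j * x ^ j) = of_nat N * x ^ N - x * (\<Sum>j<N. x ^ j)"
  by (induction N) (auto simp: algebra_simps)

lemma inverse_one_minus_root:
  assumes n: "n \<ge> 1" and c: "c \<in> mu n" "c \<noteq> 1"
  shows "1 / (1 - c) = - (1 / of_nat n) * (\<Sum>j<n. of_nat j * c ^ j)"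
proof -
  have cn: "c ^ n = 1" by (rule mu_pow_n[OF n c(1)])
  have "(\<Sum>j<n. c ^ j) = 0" using power_diff_1_eq[of c n] cn c(2) by simp
  then have "(c - 1) * (\<Sum>j<n. of_nat j * c ^ j) = of_nat n"
    using weighted_geometric_sum[of c n] cn by simp
  then show ?thesis using c(2) n by (simp add: field_simps)
qed

lemma Rset_subset_inverse_n:
  assumes n: "n \<ge> 1"
  shows "Rset (U_n n) \<subseteq> subring_gen {1 / of_nat n, zeta n}"
proof (rule Rset_subset_closed[OF n])
  let ?S = "subring_gen {1 / of_nat n, zeta n}"
  fix c e w assume c: "c \<in> mu n" "c \<noteq> 1" and e: "e \<in> mu n" and w: "w \<in> ?S"
  have inv: "1 / (1 - c) \<in> ?S" unfolding inverse_one_minus_root[OF n c] using c(1)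
    by (intro subring_gen.mult subring_gen.neg subring_gen.gen subring_gen_sum subring_gen_of_nat
        subring_gen_power mu_in_subring_gen) auto
  have cw: "cnj w \<in> ?S"
    using w by (rule subring_gen_cnj) (auto simp: cnj_zeta[OF n] intro: mu_in_subring_gen subring_gen.gen)
  have "w - e * cnj w \<in> ?S" using e by (intro subring_gen_diff subring_gen.mult w cw mu_in_subring_gen) auto
  then show "(w - e * cnj w) / (1 - c) \<in> ?S"
    using inv subring_gen.mult by (metis times_divide_eq_right mult_1_right)
qed (auto intro: subring_gen.intros subring_gen_diff)

section \<open>The inverse of a composite n lies in R(U n)\<close>

lemma monic_poly_eq_prod_roots:
  fixes Q :: "complex poly" and r :: "nat \<Rightarrow> complex"
  assumes fin: "finite I" and inj: "inj_on r I" and roots: "\<And>i. i \<in> I \<Longrightarrow> poly Q (r i) = 0"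
    and deg: "degree Q \<le> card I" and lc: "coeff Q (card I) = 1"
  shows "poly Q x = (\<Prod>i\<in>I. x - r i)"
proof -
  define P where "P = (\<Prod>i\<in>I. [:- r i, 1:])"
  have dP: "degree P = card I" unfolding P_def
    by (subst degree_prod_sum_eq) (auto simp: fin)
  have lP: "lead_coeff P = 1" unfolding P_def lead_coeff_prod by simp
  have "P = Q"
  proof (rule poly_eqI_degree_lead_coeff[of P "card I" Q "r ` I"])
    show "coeff P (card I) = coeff Q (card I)"
      using lP dP lc by simp
    show "card I \<le> card (r ` I)" using card_image[OF inj] by simp
    show "degree P \<le> card I" using dP by simp
    show "degree Q \<le> card I" by (fact deg)
    fix z assume "z \<in> r ` I"
    then obtain i where i: "i \<in> I" "z = r i" by auto
    have "poly P z = 0" unfolding P_def poly_prod using i fin by (intro prod_zero) auto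
    then show "poly P z = poly Q z" using roots i by simp
  qed
  then show ?thesis
    using poly_prod[of "\<lambda>i. [:- r i, 1:]" I x] by (simp add: P_def)
qed

lemma prod_x_minus_roots_of_unity:
  fixes eta :: complex
  assumes d: "d \<ge> 1" and ed: "eta ^ d = 1" and inj: "inj_on (\<lambda>i. eta ^ i) {..<d}"
  shows "(\<Prod>i<d. x - eta ^ i) = x ^ d - 1"
proof -
  let ?Q = "monom 1 d - 1 :: complex poly"
  have "poly ?Q x = (\<Prod>i\<in>{..<d}. x - eta ^ i)"
  proof (rule monic_poly_eq_prod_roots[OF _ inj])
    show "degree ?Q \<le> card {..<d}" by (simp add: degree_diff_le degree_monom_le)
    show "coeff ?Q (card {..<d}) = 1" using d by simp
    fix i show "poly ?Q (eta ^ i) = 0"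
      by (simp add: poly_monom power_mult[symmetric] mult.commute[of i d] power_mult ed)
  qed simp
  then show ?thesis by (simp add: poly_monom)
qed

lemma prod_one_minus_roots_of_unity:
  fixes z :: complex
  assumes n: "n \<ge> 1" and zn: "z ^ n = 1" and inj: "inj_on (\<lambda>i. z ^ i) {..<n}"
  shows "(\<Prod>i\<in>{1..<n}. 1 - z ^ i) = of_nat n"
proof -
  let ?Q = "(\<Sum>i<n. monom 1 i) :: complex poly"
  have c: "card {1..<n} = n - 1" by simp
  have "poly ?Q 1 = (\<Prod>i\<in>{1..<n}. 1 - z ^ i)"
  proof (rule monic_poly_eq_prod_roots)
    show "inj_on (\<lambda>i. z ^ i) {1..<n}" using inj by (rule inj_on_subset) auto
    show "degree ?Q \<le> card {1..<n}" unfolding c by (rule degree_le) (auto simp: coeff_sum)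
    show "coeff ?Q (card {1..<n}) = 1" unfolding c using n by (simp add: coeff_sum)
    fix i assume i: "i \<in> {1..<n}"
    have "z ^ i \<noteq> z ^ 0" using inj_onD[OF inj, of i 0] i by auto
    moreover have "(z ^ i) ^ n = 1" by (simp add: power_mult[symmetric] mult.commute[of i n] power_mult zn)
    ultimately have "(\<Sum>j<n. (z ^ i) ^ j) = 0" using power_diff_1_eq[of "z ^ i" n] by simp
    then show "poly ?Q (z ^ i) = 0" by (simp add: poly_sum poly_monom)
  qed simp
  then show ?thesis by (simp add: poly_sum poly_monom)
qed

definition sqnorm :: "complex \<Rightarrow> complex" where
  "sqnorm x = x * cnj x"

lemma sqnorm_real: "cnj (sqnorm x) = sqnorm x"
  by (simp add: sqnorm_def mult.commute)

lemma sqnorm_eq_0_iff [simp]: "sqnorm x = 0 \<longleftrightarrow> x = 0"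
  by (simp add: sqnorm_def)

lemma sqnorm_prod: "sqnorm (\<Prod>i\<in>A. f i) = (\<Prod>i\<in>A. sqnorm (f i))"
  by (simp add: sqnorm_def cnj_prod prod.distrib)

lemma sqnorm_one_minus_root_in_subring:
  assumes n: "n \<ge> 1" and u: "u \<in> mu n"
  shows "sqnorm (1 - u) \<in> subring_gen {zeta n}"
proof -
  have "sqnorm (1 - u) = (1 - u) * (1 - cnj u)" by (simp add: sqnorm_def)
  also have "\<dots> \<in> subring_gen {zeta n}"
    using u mu_cnj_closed[OF n u]
    by (intro subring_gen.mult subring_gen_diff subring_gen.one mu_in_subring_gen) auto
  finally show ?thesis .
qed

text \<open>The ratio |1 - u|^2 / |1 - v|^2 is obtained by two intersections: first y = (1 - u)/(1 - v),
  then the point where the line through y with squared direction 1/v meets the real axis.\<close>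

lemma meet_sqnorm_ratio:
  assumes u: "cmod u = 1" and v: "cmod v = 1" and v1: "v \<noteq> 1"
  shows "meet 1 (inverse v) 0 ((1 - u) / (1 - v)) = sqnorm (1 - u) / sqnorm (1 - v)"
proof -
  have u0: "u \<noteq> 0" and v0: "v \<noteq> 0" using u v by auto
  define a b where "a = 1 - u" and "b = 1 - v"
  have b0: "b \<noteq> 0" using v1 by (simp add: b_def)
  have ca: "cnj a = - a / u" and cb: "cnj b = - b / v" and iv: "1 - inverse v = - b / v"
    using u0 v0 by (simp_all add: a_def b_def unit_cnj[OF u] unit_cnj[OF v] field_simps)
  have "meet 1 (inverse v) 0 (a / b) = (a / b - inverse v * (cnj a / cnj b)) / (- b / v)"
    by (simp only: meet_def iv complex_cnj_divide diff_zero add_0 mult_1)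
  also have "\<dots> = v * a * (1 - u) / (u * b * b)"
    using u0 v0 b0 by (simp add: ca cb field_simps)
  also have "\<dots> = sqnorm a / sqnorm b"
    using u0 v0 b0 by (simp add: sqnorm_def ca cb field_simps flip: a_def)
  finally show ?thesis by (simp add: a_def b_def)
qed

context
  fixes n :: nat
  assumes n3: "n \<ge> 3"
begin

text \<open>These ratios are real elements of R(U_n), hence multipliers.\<close>

lemma sqnorm_ratio_multiplier:
  assumes u: "u \<in> mu n" and v: "v \<in> mu n" "v \<noteq> 1"
  shows "sqnorm (1 - u) / sqnorm (1 - v) \<in> multipliers (Rset (U_n n))"
proof -
  have n: "n \<ge> 1" using n3 by simp
  have u0: "u \<noteq> 0" and v0: "v \<noteq> 0" using u v mu_nonzero by auto
  have "meet (u / v) u 0 1 = (1 - u) / (1 - v)"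
    using u0 v0 v(2) by (simp add: meet_def field_simps)
  moreover have "meet (u / v) u 0 1 \<in> Rset (U_n n)"
    using u0 v0 v(2) by (intro Rset_meet[OF n Rset.zero Rset.one mu_divide[OF n u v(1)] u])
      (simp add: field_simps)
  ultimately have "(1 - u) / (1 - v) \<in> Rset (U_n n)" by simp
  then have "meet 1 (inverse v) 0 ((1 - u) / (1 - v)) \<in> Rset (U_n n)"
    using v by (intro Rset_meet[OF n Rset.zero _ one_in_mu mu_inverse[OF n v(1)]]) auto
  then have "sqnorm (1 - u) / sqnorm (1 - v) \<in> Rset (U_n n)"
    using meet_sqnorm_ratio[OF mu_norm[OF u] mu_norm[OF v(1)] v(2)] by simp
  then show ?thesis by (rule real_multiplier[OF n3]) (simp add: sqnorm_real)
qed

text \<open>For d m = n, the numbers zeta^(1 + i m), i < d, are the roots of x^d = zeta^d.\<close>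

lemma prod_one_minus_coset:
  assumes dm: "d * m = n"
  shows "(\<Prod>i<d. 1 - zeta n ^ (1 + i * m)) = 1 - zeta n ^ d"
proof -
  have n: "n \<ge> 1" using n3 by simp
  define eta where "eta = zeta n ^ m"
  have "d * m \<noteq> 0" using dm n3 by simp
  then have d1: "d \<ge> 1" and m1: "m \<ge> 1" by simp_all
  have ed: "eta ^ d = 1" unfolding eta_def power_mult[symmetric] using dm zeta_pow_n[OF n]
    by (simp add: mult.commute)
  have inj: "inj_on (\<lambda>i. eta ^ i) {..<d}"
  proof (rule inj_onI)
    fix i j assume i: "i \<in> {..<d}" and j: "j \<in> {..<d}" and "eta ^ i = eta ^ j"
    then have "(m * i) mod n = (m * j) mod n"
      using zeta_pow_eq_iff[OF n] by (simp add: eta_def flip: power_mult)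
    moreover have "m * i < n" "m * j < n" using i j dm m1 by (auto simp: mult.commute)
    ultimately show "i = j" using m1 by simp
  qed
  have ei: "eta ^ i = zeta n ^ (i * m)" for i by (simp add: eta_def power_mult[symmetric] mult.commute)
  have "(\<Prod>i<d. 1 - zeta n ^ (1 + i * m)) = (\<Prod>i<d. zeta n * (inverse (zeta n) - eta ^ i))"
    by (rule prod.cong) (auto simp: ei field_simps power_add)
  also have "\<dots> = zeta n ^ d * (inverse (zeta n) ^ d - 1)"
    by (simp add: prod.distrib prod_x_minus_roots_of_unity[OF d1 ed inj])
  also have "\<dots> = 1 - zeta n ^ d" by (simp add: field_simps power_inverse)
  finally show ?thesis .
qed

lemma prod_one_minus_zeta_pow: "(\<Prod>c\<in>{1..<n}. 1 - zeta n ^ c) = of_nat n"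
proof -
  have n: "n \<ge> 1" using n3 by simp
  show ?thesis
    by (rule prod_one_minus_roots_of_unity[OF n zeta_pow_n[OF n]])
      (auto intro: inj_onI simp: zeta_pow_eq_iff[OF n])
qed

text \<open>For a proper divisor d of n, 1/|1 - zeta|^2 is a product of multipliers: the ratios over the
  coset give |1 - zeta^d|^2 / |1 - zeta|^(2d), and |1 - zeta|^2 / |1 - zeta^d|^2 corrects it.\<close>

lemma inverse_sqnorm_multiplier:
  assumes np: "\<not> prime n"
  shows "1 / sqnorm (1 - zeta n) \<in> multipliers (Rset (U_n n))"
proof -
  have n: "n \<ge> 1" using n3 by simp
  obtain d where d: "d dvd n" "d \<noteq> 1" "d \<noteq> n"
    using np n3 by (auto simp: prime_nat_iff)
  obtain m where dm: "d * m = n" using d(1) by (metis dvd_def)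
  have d2: "d \<ge> 2" using d(2) dm n3 by (cases d) auto
  have "d < n" using d(1,3) dvd_imp_le n by fastforce
  then have zd: "zeta n ^ d \<noteq> 1" using d2 zeta_pow_eq_1_iff[OF n] by (auto dest: dvd_imp_le)
  have z1: "zeta n \<noteq> 1" by (rule zeta_ne_one[OF n3])
  define a where "a = sqnorm (1 - zeta n)"
  have a0: "a \<noteq> 0" and ad0: "sqnorm (1 - zeta n ^ d) \<noteq> 0" using z1 zd by (simp_all add: a_def)
  have ad: "sqnorm (1 - zeta n ^ d) = (\<Prod>i<d. sqnorm (1 - zeta n ^ (1 + i * m)))"
    by (simp add: prod_one_minus_coset[OF dm, symmetric] sqnorm_prod)
  have "1 / a = (\<Prod>i<d. sqnorm (1 - zeta n ^ (1 + i * m)) / a) * (a / sqnorm (1 - zeta n ^ d))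
      * a ^ (d - 2)"
  proof -
    have "(\<Prod>i<d. sqnorm (1 - zeta n ^ (1 + i * m)) / a) = sqnorm (1 - zeta n ^ d) / a ^ d"
      unfolding prod_dividef ad[symmetric] by simp
    moreover have "a ^ d = a * a * a ^ (d - 2)"
      using d2 by (metis le_add_diff_inverse power_add power2_eq_square)
    ultimately show ?thesis using a0 ad0 by (simp add: field_simps)
  qed
  also have "\<dots> \<in> multipliers (Rset (U_n n))"
    unfolding a_def using z1 zd
    by (intro multipliers_mult multipliers_prod sqnorm_ratio_multiplier subring_gen_power[THEN
          subsetD[OF subring_zeta_multipliers[OF n3]]] sqnorm_one_minus_root_in_subring[OF n])
      (auto intro: mu_mult)
  finally show ?thesis unfolding a_def .
qed

text \<open>Then 1/n = n Prod_{c=1}^{n-1} 1/|1 - zeta^c|^2 is a multiplier.\<close>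

lemma inverse_n_multiplier:
  assumes np: "\<not> prime n"
  shows "1 / of_nat n \<in> multipliers (Rset (U_n n))"
proof -
  have n: "n \<ge> 1" using n3 by simp
  define a where "a = sqnorm (1 - zeta n)"
  have a0: "a \<noteq> 0" using zeta_ne_one[OF n3] by (simp add: a_def)
  have roots: "zeta n ^ c \<noteq> 1" if "c \<in> {1..<n}" for c
    using that zeta_pow_eq_1_iff[OF n] by (auto dest: dvd_imp_le)
  have "(\<Prod>c\<in>{1..<n}. a / sqnorm (1 - zeta n ^ c) * (1 / a))
      = 1 / (\<Prod>c\<in>{1..<n}. sqnorm (1 - zeta n ^ c))"
    using a0 by (simp add: prod_dividef)
  also have "(\<Prod>c\<in>{1..<n}. sqnorm (1 - zeta n ^ c)) = sqnorm (of_nat n)"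
    unfolding sqnorm_prod[symmetric] prod_one_minus_zeta_pow ..
  also have "\<dots> = of_nat n * of_nat n" by (simp add: sqnorm_def)
  finally have "1 / of_nat n = of_nat n * (\<Prod>c\<in>{1..<n}. a / sqnorm (1 - zeta n ^ c) * (1 / a))"
    using n by simp
  also have "\<dots> \<in> multipliers (Rset (U_n n))"
    unfolding a_def using roots zeta_ne_one[OF n3]
    by (intro multipliers_mult multipliers_prod sqnorm_ratio_multiplier inverse_sqnorm_multiplier[OF np]
        subsetD[OF subring_zeta_multipliers[OF n3] subring_gen_of_nat]) auto
  finally show ?thesis .
qed

end

theorem theorem2:
  fixes n :: nat
  assumes "n \<ge> 3"
  shows "(prime n \<longrightarrow> Rset (U_n n) = subring_gen {zeta n})
       \<and> (\<not> prime n \<longrightarrow> Rset (U_n n) = subring_gen {1 / of_nat n, zeta n})"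
proof (intro conjI impI)
  have n: "n \<ge> 1" using assms by simp
  have zeta: "zeta n \<in> multipliers (Rset (U_n n))" by (rule zeta_multiplier[OF assms])
  show "Rset (U_n n) = subring_gen {zeta n}" if "prime n"
  proof
    show "Rset (U_n n) \<subseteq> subring_gen {zeta n}" by (rule Rset_subset_prime[OF that])
    show "subring_gen {zeta n} \<subseteq> Rset (U_n n)" using zeta by (intro subring_gen_subset_Rset[OF assms]) simp
  qed
  show "Rset (U_n n) = subring_gen {1 / of_nat n, zeta n}" if "\<not> prime n"
  proof
    show "Rset (U_n n) \<subseteq> subring_gen {1 / of_nat n, zeta n}" by (rule Rset_subset_inverse_n[OF n])
    show "subring_gen {1 / of_nat n, zeta n} \<subseteq> Rset (U_n n)"
      using zeta inverse_n_multiplier[OF assms that] by (intro subring_gen_subset_Rset[OF assms]) simp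
  qed
qed

end
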